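(* Let $E$ be a fixed-point equation system whose formulas may contain $\min$, with interpretation $[\![E]\!]\colon\mathbb{E}(D)\to\mathbb{E}(D)$, and let $\eta'\in\mathbb{E}(D)$. Then $\eta'\le\mu[\![E]\!]$ if there exist: (a) a fixed-point equation system $E'$ (possibly with $\min$) over the same predicate variables with $[\![E']\!]\le[\![E]\!]$; (b) $u\in\mathbb{E}(D)$ with $[\![E'^{\max}]\!](u)\le u$; (c) a function $r\colon D\to[0,\infty)$ with $[\![\mathsf{D}E'^{\max}]\!](r)+u\le r$; and (d) $\eta'\le u$ with $\eta'\le[\![E']\!](\eta')$.
   Context: $\mathbb{E}(D)$ is the set of functions $D\to[0,\infty]$ with pointwise order and operations ($\infty+x=\infty$, $0\cdot\infty=0$, $r\cdot\infty=\infty$ for $r>0$); $\mu$ denotes least fixed point. Quantitative formulas over predicate variables $X_1,\dots,X_n$ ($X_j$ of type $D_j\to\Omega$): $F ::= X_j(\tilde e)\mid t\mid F_1+F_2\mid t\cdot F\mid \mathbf{if}\ \varphi\ \mathbf{then}\ F_1\ \mathbf{else}\ F_2\mid\min\{F_1,\dots,F_m\}$, with $\tilde e$ expressions, $t$ a $[0,\infty)$-valued term, $\varphi$ boolean; interpreted by $[\![X_j(e)]\!](\eta)(v)=\eta_j([\![e]\!](v))$, $[\![t]\!](\eta)(v)=[\![t]\!](v)$, pointwise sum, scalar product and minimum, and case distinction. A fixed-point equation system $E=\{X_i(\tilde x_i)=_\mu F_i\}_{i=1}^n$ has interpretation $[\![E]\!](\eta)=([\![F_1]\!](\eta),\dots,[\![F_n]\!](\eta))$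 on $\mathbb{E}(D)$, $D=\coprod_jD_j$. $E'^{\max}$ is obtained by replacing every $\min$ in $E'$ with $\max$ (pointwise maximum). $\mathsf{D}E$ applies to each right-hand side the syntactic transformation $\mathsf{D}(X_j(\tilde e))=X_j(\tilde e)$, $\mathsf{D}t=0$, $\mathsf{D}(F_1+F_2)=\mathsf{D}F_1+\mathsf{D}F_2$, $\mathsf{D}(t\cdot F)=t\cdot\mathsf{D}F$, $\mathsf{D}$ commuting with conditionals, $\min$ and $\max$. *)

theory Defs
  imports "HOL-Library.Extended_Nonnegative_Real"
begin

text \<open>The disjoint union D of the argument domains is represented as 'v \<times> 'a:
  the component D_j is {j} \<times> UNIV.  A valuation of the parameters of an
  equation X_i(x_i) is an element of 'a.  Expressions are functions 'a \<Rightarrow> 'a,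
  terms are real-valued functions (required to be nonnegative, see nonneg_terms),
  boolean conditions are predicates on 'a.  MinF F Fs is min{F, Fs...} (nonempty);
  MaxF is the pointwise maximum, used for E'^max.\<close>

datatype ('v, 'a) qform =
    PVar 'v "'a \<Rightarrow> 'a"
  | Term "'a \<Rightarrow> real"
  | Plus "('v, 'a) qform" "('v, 'a) qform"
  | Scale "'a \<Rightarrow> real" "('v, 'a) qform"
  | Cond "'a \<Rightarrow> bool" "('v, 'a) qform" "('v, 'a) qform"
  | MinF "('v, 'a) qform" "('v, 'a) qform list"
  | MaxF "('v, 'a) qform" "('v, 'a) qform list"

fun sem :: "('v, 'a) qform \<Rightarrow> ('v \<times> 'a \<Rightarrow> ennreal) \<Rightarrow> 'a \<Rightarrow> ennreal" where
  "sem (PVar j e) \<eta> v = \<eta> (j, e v)"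
| "sem (Term t) \<eta> v = ennreal (t v)"
| "sem (Plus F G) \<eta> v = sem F \<eta> v + sem G \<eta> v"
| "sem (Scale t F) \<eta> v = ennreal (t v) * sem F \<eta> v"
| "sem (Cond \<phi> F G) \<eta> v = (if \<phi> v then sem F \<eta> v else sem G \<eta> v)"
| "sem (MinF F Fs) \<eta> v = foldl min (sem F \<eta> v) (map (\<lambda>G. sem G \<eta> v) Fs)"
| "sem (MaxF F Fs) \<eta> v = foldl max (sem F \<eta> v) (map (\<lambda>G. sem G \<eta> v) Fs)"

fun nonneg_terms :: "('v, 'a) qform \<Rightarrow> bool" where
  "nonneg_terms (PVar j e) = True"
| "nonneg_terms (Term t) = (\<forall>v. 0 \<le> t v)"
| "nonneg_terms (Plus F G) = (nonneg_terms F \<and> nonneg_terms G)"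
| "nonneg_terms (Scale t F) = ((\<forall>v. 0 \<le> t v) \<and> nonneg_terms F)"
| "nonneg_terms (Cond \<phi> F G) = (nonneg_terms F \<and> nonneg_terms G)"
| "nonneg_terms (MinF F Fs) = (nonneg_terms F \<and> (\<forall>G\<in>set Fs. nonneg_terms G))"
| "nonneg_terms (MaxF F Fs) = (nonneg_terms F \<and> (\<forall>G\<in>set Fs. nonneg_terms G))"

text \<open>Formulas of the paper's grammar (which has min but no max).\<close>
fun max_free :: "('v, 'a) qform \<Rightarrow> bool" where
  "max_free (PVar j e) = True"
| "max_free (Term t) = True"
| "max_free (Plus F G) = (max_free F \<and> max_free G)"
| "max_free (Scale t F) = max_free F"
| "max_free (Cond \<phi> F G) = (max_free F \<and> max_free G)"
| "max_free (MinF F Fs) = (max_free F \<and> (\<forall>G\<in>set Fs. max_free G))"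
| "max_free (MaxF F Fs) = False"

fun tomax :: "('v, 'a) qform \<Rightarrow> ('v, 'a) qform" where
  "tomax (PVar j e) = PVar j e"
| "tomax (Term t) = Term t"
| "tomax (Plus F G) = Plus (tomax F) (tomax G)"
| "tomax (Scale t F) = Scale t (tomax F)"
| "tomax (Cond \<phi> F G) = Cond \<phi> (tomax F) (tomax G)"
| "tomax (MinF F Fs) = MaxF (tomax F) (map tomax Fs)"
| "tomax (MaxF F Fs) = MaxF (tomax F) (map tomax Fs)"

fun Dform :: "('v, 'a) qform \<Rightarrow> ('v, 'a) qform" where
  "Dform (PVar j e) = PVar j e"
| "Dform (Term t) = Term (\<lambda>_. 0)"
| "Dform (Plus F G) = Plus (Dform F) (Dform G)"
| "Dform (Scale t F) = Scale t (Dform F)"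
| "Dform (Cond \<phi> F G) = Cond \<phi> (Dform F) (Dform G)"
| "Dform (MinF F Fs) = MinF (Dform F) (map Dform Fs)"
| "Dform (MaxF F Fs) = MaxF (Dform F) (map Dform Fs)"

text \<open>Equation systems {X_i(x_i) =_mu F_i}: the right-hand side of each variable.\<close>
type_synonym ('v, 'a) eqsys = "'v \<Rightarrow> ('v, 'a) qform"

definition sem_sys :: "('v, 'a) eqsys \<Rightarrow> ('v \<times> 'a \<Rightarrow> ennreal) \<Rightarrow> ('v \<times> 'a \<Rightarrow> ennreal)" where
  "sem_sys E \<eta> = (\<lambda>(i, v). sem (E i) \<eta> v)"

definition max_sys :: "('v, 'a) eqsys \<Rightarrow> ('v, 'a) eqsys" where
  "max_sys E = (\<lambda>i. tomax (E i))"

definition D_sys :: "('v, 'a) eqsys \<Rightarrow> ('v, 'a) eqsys" where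
  "D_sys E = (\<lambda>i. Dform (E i))"

end

theory Submission
  imports Defs
begin

text \<open>
  The semantics of a formula F satisfies [F](b) \<le> [F](a) + [D F^max](d) whenever
  b \<le> a + d, and [D F^max] is positively homogeneous.  Let L be any prefixed point
  of [E], such as \<mu>[E].  Starting from \<eta>' \<le> u \<le> r, induction on k gives
  \<eta>' \<le> L + r/(k+1): from \<eta>' \<le> [E'](\<eta>') and [E'] \<le> [E] we get
  \<eta>' \<le> L + [D E'^max](r)/(k+1) \<le> L + (r - u)/(k+1), which together with \<eta>' \<le> u
  gives the bound for k+1.  As r is finite, letting k \<rightarrow> \<infinity> gives \<eta>' \<le> L.
\<close>

lemma min_le_min_add_max:
  fixes a a' b b' k l :: "'a::{linorder, ordered_ab_semigroup_add}"
  assumes "a' \<le> a + k" and "b' \<le> b + l"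
  shows "min a' b' \<le> min a b + max k l"
proof -
  have "a' \<le> a + max k l" "b' \<le> b + max k l"
    using assms by (meson add_left_mono max.cobounded1 max.cobounded2 order.trans)+
  then show ?thesis
    by (cases "a \<le> b")
      (auto simp: min_def intro: order.trans[OF min.cobounded1] order.trans[OF min.cobounded2])
qed

lemma max_le_max_add_max:
  fixes a a' b b' k l :: "'a::{linorder, ordered_ab_semigroup_add}"
  assumes "a' \<le> a + k" and "b' \<le> b + l"
  shows "max a' b' \<le> max a b + max k l"
  using assms by (meson add_mono max.boundedI max.cobounded1 max.cobounded2 order.trans)

lemma foldl_le_foldl_add_foldl_max:
  fixes h :: "'a::{linorder, ordered_ab_semigroup_add} \<Rightarrow> 'a \<Rightarrow> 'a"
  assumes h: "\<And>a' a b' b k l. a' \<le> a + k \<Longrightarrow> b' \<le> b + l \<Longrightarrow> h a' b' \<le> h a b + max k l"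
    and "a' \<le> a + k" and "\<And>x. x \<in> set xs \<Longrightarrow> f' x \<le> f x + g x"
  shows "foldl h a' (map f' xs) \<le> foldl h a (map f xs) + foldl max k (map g xs)"
  using assms(2,3)
proof (induction xs arbitrary: a' a k)
  case (Cons x xs)
  have "h a' (f' x) \<le> h a (f x) + max k (g x)"
    using Cons.prems by (intro h) auto
  with Cons show ?case by simp
qed simp

lemma foldl_map_hom:
  assumes "\<And>x y. f (h x y) = h (f x) (f y)"
  shows "foldl h (f a) (map f xs) = f (foldl h a xs)"
  by (induction xs arbitrary: a) (simp_all flip: assms)

lemma sem_Dform_mult: "sem (Dform F) (\<lambda>x. c * d x) v = c * sem (Dform F) d v"
proof (induction F arbitrary: v)
  case (Scale t F)
  then show ?case by (simp add: mult.left_commute)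
next
  case (MinF F Fs)
  have "mono ((*) c)"
    by (simp add: monoI mult_left_mono)
  with MinF show ?case
    by (simp add: o_def foldl_map_hom[where f = "(*) c", symmetric] min_of_mono cong: map_cong)
next
  case (MaxF F Fs)
  have "mono ((*) c)"
    by (simp add: monoI mult_left_mono)
  with MaxF show ?case
    by (simp add: o_def foldl_map_hom[where f = "(*) c", symmetric] max_of_mono cong: map_cong)
qed (simp_all add: distrib_left)

lemma sem_le_add_sem_Dform_tomax:
  assumes "\<And>x. b x \<le> a x + d x"
  shows "sem F b v \<le> sem F a v + sem (Dform (tomax F)) d v"
proof (induction F arbitrary: v)
  case (Plus F G)
  have "sem F b v + sem G b v
      \<le> (sem F a v + sem (Dform (tomax F)) d v) + (sem G a v + sem (Dform (tomax G)) d v)"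
    using Plus.IH by (rule add_mono)
  then show ?case
    by (simp add: ac_simps)
next
  case (Scale t F)
  then show ?case
    by (simp add: mult_left_mono flip: distrib_left)
next
  case (MinF F Fs)
  have "foldl min (sem F b v) (map (\<lambda>G. sem G b v) Fs)
      \<le> foldl min (sem F a v) (map (\<lambda>G. sem G a v) Fs)
        + foldl max (sem (Dform (tomax F)) d v) (map (\<lambda>G. sem (Dform (tomax G)) d v) Fs)"
    using MinF.IH by (intro foldl_le_foldl_add_foldl_max min_le_min_add_max) auto
  then show ?case
    by (simp add: o_def)
next
  case (MaxF F Fs)
  have "foldl max (sem F b v) (map (\<lambda>G. sem G b v) Fs)
      \<le> foldl max (sem F a v) (map (\<lambda>G. sem G a v) Fs)
        + foldl max (sem (Dform (tomax F)) d v) (map (\<lambda>G. sem (Dform (tomax G)) d v) Fs)"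
    using MaxF.IH by (intro foldl_le_foldl_add_foldl_max max_le_max_add_max) auto
  then show ?case
    by (simp add: o_def)
qed (simp_all add: assms)

lemma sem_mono:
  assumes "a \<le> b"
  shows "sem F a v \<le> sem F b v"
proof -
  have "sem F a v \<le> sem F b v + sem (Dform (tomax F)) (\<lambda>_. 0) v"
    using assms by (intro sem_le_add_sem_Dform_tomax) (simp add: le_funD)
  then show ?thesis
    using sem_Dform_mult[of "tomax F" 0 "\<lambda>_. 0" v] by simp
qed

lemma mono_sem_sys: "mono (sem_sys E)"
  by (intro monoI le_funI) (auto simp: sem_sys_def sem_mono split: prod.split)

lemma sem_sys_le_add_sem_sys_D_max:
  assumes "\<And>x. b x \<le> a x + d x"
  shows "sem_sys E b x \<le> sem_sys E a x + sem_sys (D_sys (max_sys E)) d x"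
  by (cases x) (simp add: sem_sys_def D_sys_def max_sys_def sem_le_add_sem_Dform_tomax assms)

lemma sem_sys_D_divide:
  fixes m :: ennreal
  shows "sem_sys (D_sys E) (\<lambda>x. d x / m) x = sem_sys (D_sys E) d x / m"
  using sem_Dform_mult[of _ "inverse m" d]
  by (simp add: sem_sys_def D_sys_def divide_ennreal_def mult.commute split: prod.split)

lemma le_add_divide_iff_ennreal:
  fixes n l d m :: ennreal
  assumes "m \<noteq> 0" and "m \<noteq> \<infinity>"
  shows "n \<le> l + d / m \<longleftrightarrow> m * n \<le> m * l + d"
proof -
  have "m * (l + d / m) = m * l + d"
    using assms by (simp add: distrib_left ennreal_times_divide mult.commute[of m] mult_divide_eq_ennreal)
  then show ?thesis
    using ennreal_mult_le_mult_iff[of m n "l + d / m"] assms by simp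
qed

lemma le_add_divide_Suc_step:
  fixes n l d u r :: ennreal
  assumes "n \<le> l + d / of_nat (Suc k)" and "n \<le> u" and "d + u \<le> r"
  shows "n \<le> l + r / of_nat (Suc (Suc k))"
proof -
  have "of_nat (Suc (Suc k)) * n = of_nat (Suc k) * n + n"
    by (simp add: distrib_right)
  also have "\<dots> \<le> (of_nat (Suc k) * l + d) + u"
    using assms(1,2) by (intro add_mono) (simp_all add: le_add_divide_iff_ennreal)
  also have "\<dots> \<le> of_nat (Suc k) * l + r"
    using assms(3) by (simp add: add.assoc add_left_mono)
  also have "\<dots> \<le> of_nat (Suc (Suc k)) * l + r"
    by (intro add_right_mono mult_right_mono) simp_all
  finally show ?thesis
    by (simp add: le_add_divide_iff_ennreal del: of_nat_Suc)
qed

lemma le_of_le_add_divide_Suc: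
  fixes n l r :: ennreal
  assumes "\<And>k. n \<le> l + r / of_nat (Suc k)" and "r < \<infinity>"
  shows "n \<le> l"
proof (rule LIMSEQ_le_const)
  obtain \<rho> where \<rho>: "r = ennreal \<rho>" "0 \<le> \<rho>"
    using assms(2) by (cases r) auto
  have "r / of_nat (Suc k) = ennreal (\<rho> / real (Suc k))" for k
    using \<rho> by (metis divide_ennreal ennreal_of_nat_eq_real_of_nat of_nat_0_less_iff zero_less_Suc)
  moreover have "(\<lambda>k. \<rho> / real (Suc k)) \<longlonglongrightarrow> 0"
    using lim_const_over_n[of \<rho>] LIMSEQ_Suc by blast
  ultimately have "(\<lambda>k. r / of_nat (Suc k)) \<longlonglongrightarrow> 0"
    using tendsto_ennrealI[of _ 0] by simp
  then show "(\<lambda>k. l + r / of_nat (Suc k)) \<longlonglongrightarrow> l"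
    using tendsto_add[OF tendsto_const, of _ 0 _ l] by simp
qed (use assms in auto)

lemma le_prefixed_point_add_divide_Suc:
  fixes E E' :: "('v, 'a) eqsys"
  assumes "sem_sys E' \<le> sem_sys E" and "sem_sys E L \<le> L"
    and "\<forall>x. sem_sys (D_sys (max_sys E')) r x + u x \<le> r x"
    and "\<eta>' \<le> u" and "\<eta>' \<le> sem_sys E' \<eta>'"
  shows "\<eta>' x \<le> L x + r x / of_nat (Suc k)"
proof -
  let ?D = "sem_sys (D_sys (max_sys E'))"
  show ?thesis
  proof (induction k arbitrary: x)
    case 0
    have "\<eta>' x \<le> u x"
      using assms(4) by (rule le_funD)
    also have "\<dots> \<le> ?D r x + u x"
      by (simp add: add_increasing)
    also have "\<dots> \<le> r x"
      using assms(3) by blast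
    also have "\<dots> \<le> L x + r x / of_nat (Suc 0)"
      by (simp add: divide_ennreal_def add_increasing)
    finally show ?case .
  next
    case (Suc k)
    have "\<eta>' x \<le> sem_sys E' \<eta>' x"
      using assms(5) by (rule le_funD)
    also have "\<dots> \<le> sem_sys E' L x + ?D (\<lambda>y. r y / of_nat (Suc k)) x"
      using Suc.IH by (rule sem_sys_le_add_sem_sys_D_max)
    also have "\<dots> = sem_sys E' L x + ?D r x / of_nat (Suc k)"
      by (simp add: sem_sys_D_divide)
    also have "\<dots> \<le> L x + ?D r x / of_nat (Suc k)"
      using assms(1,2) by (intro add_right_mono) (metis le_funD order.trans)
    finally show ?case
      using le_funD[OF assms(4), of x] assms(3) by (blast intro: le_add_divide_Suc_step)
  qed
qed

lemma le_prefixed_point: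
  fixes E E' :: "('v, 'a) eqsys"
  assumes "sem_sys E' \<le> sem_sys E" and "sem_sys E L \<le> L" and "\<forall>x. r x < \<infinity>"
    and "\<forall>x. sem_sys (D_sys (max_sys E')) r x + u x \<le> r x"
    and "\<eta>' \<le> u" and "\<eta>' \<le> sem_sys E' \<eta>'"
  shows "\<eta>' \<le> L"
proof (rule le_funI)
  fix x
  show "\<eta>' x \<le> L x"
    by (rule le_of_le_add_divide_Suc[OF le_prefixed_point_add_divide_Suc[OF assms(1,2,4-6)]
          assms(3)[rule_format]])
qed

theorem corollaryE5:
  fixes E E' :: "('v::finite, 'a) eqsys"
    and \<eta>' u r :: "'v \<times> 'a \<Rightarrow> ennreal"
  assumes E_wf: "\<forall>i. nonneg_terms (E i) \<and> max_free (E i)"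
    and E'_wf: "\<forall>i. nonneg_terms (E' i) \<and> max_free (E' i)"
    and a: "sem_sys E' \<le> sem_sys E"
    and b: "sem_sys (max_sys E') u \<le> u"
    and c_fin: "\<forall>x. r x < \<infinity>"
    and c: "\<forall>x. sem_sys (D_sys (max_sys E')) r x + u x \<le> r x"
    and d1: "\<eta>' \<le> u"
    and d2: "\<eta>' \<le> sem_sys E' \<eta>'"
  shows "\<eta>' \<le> lfp (sem_sys E)"
  by (rule le_prefixed_point[OF a _ c_fin c d1 d2]) (simp add: lfp_fixpoint mono_sem_sys)

end
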